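(* Let $n\ge2$ and let $G=\{G_1,\ldots,G_t\}\subseteq\mathrm{H}(n,\mathbb{Q}(\mathrm{i}))$ be such that every $G_i$ is non-redundant. Suppose there exist $M_1,M_2,M_3,M_4\in G$ such that $[M_1,M_2]$ and $[M_3,M_4]$ do not have the same angle, i.e. both are nonzero and $[M_1,M_2]\notin\mathbb{R}\cdot[M_3,M_4]$. Then $\boldsymbol{I}_n\in\langle G\rangle$.
   Context: $\mathbb{Q}(\mathrm{i})=\{a+b\mathrm{i}\mid a,b\in\mathbb{Q}\}$. $\mathrm{H}(n,\mathbb{Q}(\mathrm{i}))$ is the set of $n\times n$ matrices $M=\begin{pmatrix}1&\boldsymbol{m}_1^T&m_3\\ \boldsymbol{0}&\boldsymbol{I}_{n-2}&\boldsymbol{m}_2\\ 0&\boldsymbol{0}^T&1\end{pmatrix}$ with $\boldsymbol{m}_1,\boldsymbol{m}_2\in\mathbb{Q}(\mathrm{i})^{n-2}$, $m_3\in\mathbb{Q}(\mathrm{i})$; write $\psi(M)=(\boldsymbol{m}_1,\boldsymbol{m}_2,m_3)$. For $\psi(M)=(\boldsymbol{a},\boldsymbol{b},c)$, $\psi(M')=(\boldsymbol{a}',\boldsymbol{b}',c')$, the commutator is the scalar $[M,M']=\boldsymbol{a}^T\boldsymbol{b}'-\boldsymbol{a}'^T\boldsymbol{b}\in\mathbb{Q}(\mathrm{i})$. Two commutators have the same angle if they are real multiples of each other's direction, i.e. $[M_1,M_2]=r\exp(\mathrm{i}\gamma)$ and $[M_3,M_4]=r'\exp(\mathrm{i}\gamma)$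 for some $r,r'\in\mathbb{R}$ and $\gamma\in[0,\pi)$; by convention a zero commutator has the same angle as every commutator. With $\psi(G_j)=(\boldsymbol{a}_j,\boldsymbol{b}_j,c_j)$, a generator $G_i$ is non-redundant if there exists $\boldsymbol{x}\in\mathbb{N}^t$ with $\boldsymbol{x}(i)\ge1$, $\sum_j\boldsymbol{x}(j)\boldsymbol{a}_j=\boldsymbol{0}$ and $\sum_j\boldsymbol{x}(j)\boldsymbol{b}_j=\boldsymbol{0}$ (equivalently, $G_i$ has a nonzero $i$-th component in some minimal solution of this homogeneous system). $\langle G\rangle$ is the semigroup of finite nonempty products of elements of $G$. *)

theory Defs
  imports Complex_Main "Jordan_Normal_Form.Matrix"
begin

definition gauss_rat :: "complex \<Rightarrow> bool" where
  "gauss_rat z \<longleftrightarrow> Re z \<in> \<rat> \<and> Im z \<in> \<rat>"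

definition heis :: "nat \<Rightarrow> complex mat set" where
  "heis n = {M. M \<in> carrier_mat n n \<and>
     (\<forall>i<n. \<forall>j<n.
        (if i = j then M $$ (i, j) = 1
         else if i = 0 \<or> j = n - 1 then gauss_rat (M $$ (i, j))
         else M $$ (i, j) = 0))}"

text \<open>psi(M) = (m1, m2, m3); vectors m1, m2 indexed by k = 1..n-2.\<close>
definition psi_a :: "nat \<Rightarrow> complex mat \<Rightarrow> nat \<Rightarrow> complex" where
  "psi_a n M k = M $$ (0, k)"
definition psi_b :: "nat \<Rightarrow> complex mat \<Rightarrow> nat \<Rightarrow> complex" where
  "psi_b n M k = M $$ (k, n - 1)"
definition psi_c :: "nat \<Rightarrow> complex mat \<Rightarrow> complex" where
  "psi_c n M = M $$ (0, n - 1)"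

definition heis_comm :: "nat \<Rightarrow> complex mat \<Rightarrow> complex mat \<Rightarrow> complex" where
  "heis_comm n M M' =
     (\<Sum>k\<in>{1..n-2}. psi_a n M k * psi_b n M' k) -
     (\<Sum>k\<in>{1..n-2}. psi_a n M' k * psi_b n M k)"

definition same_angle :: "complex \<Rightarrow> complex \<Rightarrow> bool" where
  "same_angle z w \<longleftrightarrow> z = 0 \<or> w = 0 \<or>
     (\<exists>r r' :: real. \<exists>\<gamma>. 0 \<le> \<gamma> \<and> \<gamma> < pi \<and>
        z = complex_of_real r * cis \<gamma> \<and> w = complex_of_real r' * cis \<gamma>)"

definition non_redundant :: "nat \<Rightarrow> nat \<Rightarrow> (nat \<Rightarrow> complex mat) \<Rightarrow> nat \<Rightarrow> bool" where
  "non_redundant n t G i \<longleftrightarrow>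
     (\<exists>x :: nat \<Rightarrow> nat. x i \<ge> 1 \<and>
        (\<forall>k\<in>{1..n-2}. (\<Sum>j<t. of_nat (x j) * psi_a n (G j) k) = 0) \<and>
        (\<forall>k\<in>{1..n-2}. (\<Sum>j<t. of_nat (x j) * psi_b n (G j) k) = 0))"

inductive_set gen_semigroup :: "complex mat set \<Rightarrow> complex mat set"
  for S :: "complex mat set" where
  base: "M \<in> S \<Longrightarrow> M \<in> gen_semigroup S"
| step: "A \<in> gen_semigroup S \<Longrightarrow> M \<in> S \<Longrightarrow> A * M \<in> gen_semigroup S"

end

theory Submission
  imports Defs
begin

(*
  Identify M in H(n) with its coordinates (a, b, c) = psi(M); then
  (a, b, c) (a', b', c') = (a + a', b + b', c + c' + a.b'), so the commutator of M and M'
  is the central element with c-coordinate [M, M'].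
  Non-redundancy of G_p yields a word p r_p in the generators whose a- and b-coordinates cancel;
  such balanced words evaluate to central matrices, and their c-coordinates form an additive
  semigroup Z. Let w_p be the c-coordinate of p r_p. Since r_p is an inverse of G_p modulo the
  centre, interleaving powers of p r_p and q r_q gives K (w_p + w_q) + s K [G_p, G_q] in Z
  whenever |s| <= K.
  Two commutators with different angles are R-linearly independent Gaussian rationals, so a
  positive integer multiple of w_1 + w_2 + w_3 + w_4 is an integer combination of them, and
  adding suitable multiples of the elements above gives 0 in Z, i.e. a product of generators
  equal to the identity.
*)

lemma gauss_rat_zero [simp]: "gauss_rat 0"
  by (simp add: gauss_rat_def)

lemma gauss_rat_add: "gauss_rat z \<Longrightarrow> gauss_rat w \<Longrightarrow> gauss_rat (z + w)"
  by (simp add: gauss_rat_def)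

lemma gauss_rat_diff: "gauss_rat z \<Longrightarrow> gauss_rat w \<Longrightarrow> gauss_rat (z - w)"
  by (simp add: gauss_rat_def)

lemma gauss_rat_mult: "gauss_rat z \<Longrightarrow> gauss_rat w \<Longrightarrow> gauss_rat (z * w)"
  by (simp add: gauss_rat_def)

lemma gauss_rat_sum: "(\<And>x. x \<in> A \<Longrightarrow> gauss_rat (f x)) \<Longrightarrow> gauss_rat (sum f A)"
  by (induction A rule: infinite_finite_induct) (auto intro: gauss_rat_add)

lemma gauss_rat_Im_mult_cnj: "gauss_rat z \<Longrightarrow> gauss_rat w \<Longrightarrow> Im (z * cnj w) \<in> \<rat>"
  by (simp add: gauss_rat_def)

lemma complex_eq_real_combination:
  assumes "Im (z1 * cnj z3) \<noteq> 0"
  shows "w = complex_of_real (Im (w * cnj z3) / Im (z1 * cnj z3)) * z1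
           + complex_of_real (Im (z1 * cnj w) / Im (z1 * cnj z3)) * z3"
proof -
  define d a b where "d = Im (z1 * cnj z3)" and "a = Im (w * cnj z3)" and "b = Im (z1 * cnj w)"
  have "complex_of_real d * w = complex_of_real a * z1 + complex_of_real b * z3"
    unfolding d_def a_def b_def by (simp add: complex_eq_iff algebra_simps)
  then show ?thesis using assms unfolding d_def[symmetric] a_def[symmetric] b_def[symmetric]
    by (simp add: field_simps)
qed

lemma gauss_rat_int_combination:
  assumes "Im (z1 * cnj z3) \<noteq> 0" and "gauss_rat z1" "gauss_rat z3" "gauss_rat w"
  shows "\<exists>Q P1 P3. Q > (0::int) \<and> of_int Q * w = of_int P1 * z1 + of_int P3 * z3"
proof -
  have "Im (w * cnj z3) / Im (z1 * cnj z3) \<in> \<rat>" "Im (z1 * cnj w) / Im (z1 * cnj z3) \<in> \<rat>"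
    by (intro Rats_divide gauss_rat_Im_mult_cnj assms)+
  then obtain a1 b1 a3 b3 :: int where "b1 > 0" "b3 > 0"
    and g1: "Im (w * cnj z3) / Im (z1 * cnj z3) = of_int a1 / of_int b1"
    and g3: "Im (z1 * cnj w) / Im (z1 * cnj z3) = of_int a3 / of_int b3"
    by (metis Rats_cases')
  have "of_int (b1 * b3) * w = of_int (a1 * b3) * z1 + of_int (a3 * b1) * z3"
    using complex_eq_real_combination[OF assms(1), of w] \<open>b1 > 0\<close> \<open>b3 > 0\<close>
    unfolding g1 g3 by (simp add: field_simps)
  then show ?thesis using \<open>b1 > 0\<close> \<open>b3 > 0\<close> by (metis mult_pos_pos)
qed

lemma polar_form_angle_less_pi: "\<exists>r \<gamma>. 0 \<le> \<gamma> \<and> \<gamma> < pi \<and> z = complex_of_real r * cis \<gamma>"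
proof -
  have z: "z = complex_of_real (cmod z) * cis (Arg z)"
    by (metis rcis_cmod_Arg rcis_def)
  have "cis (Arg z + pi) = - cis (Arg z)"
    by (simp add: cis_def complex_eq_iff)
  then have z': "z = complex_of_real (- cmod z) * cis (Arg z + pi)"
    using z by simp
  consider "0 \<le> Arg z" "Arg z < pi" | "Arg z < 0" | "Arg z = pi"
    using Arg_bounded[of z] by linarith
  then show ?thesis
  proof cases
    case 1
    then show ?thesis using z by blast
  next
    case 2
    then show ?thesis using z' Arg_bounded[of z] by (intro exI[of _ "- cmod z"] exI[of _ "Arg z + pi"]) auto
  next
    case 3
    then show ?thesis using z by (intro exI[of _ "- cmod z"] exI[of _ 0]) simp
  qed
qed

lemma Im_mult_cnj_neq_0_if_not_same_angle:
  assumes "\<not> same_angle z w"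
  shows "Im (z * cnj w) \<noteq> 0"
proof
  assume Im0: "Im (z * cnj w) = 0"
  obtain r \<gamma> where \<gamma>: "0 \<le> \<gamma>" "\<gamma> < pi" and w: "w = complex_of_real r * cis \<gamma>"
    using polar_form_angle_less_pi by blast
  have "r \<noteq> 0" using assms w by (auto simp: same_angle_def)
  moreover have "Im (z * cnj w) = r * Im (z * cis (- \<gamma>))"
    unfolding w by (simp add: cis_cnj algebra_simps)
  ultimately have "z * cis (- \<gamma>) = complex_of_real (Re (z * cis (- \<gamma>)))"
    using Im0 by (simp add: complex_eq_iff)
  moreover have "z = z * cis (- \<gamma>) * cis \<gamma>"
    by (simp add: mult.assoc cis_mult)
  ultimately have "z = complex_of_real (Re (z * cis (- \<gamma>))) * cis \<gamma>"
    by simp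
  then have "same_angle z w" using \<gamma> w unfolding same_angle_def by blast
  then show False using assms by simp
qed

lemma add_closed_add_of_nat_mult:
  fixes Z :: "'a::semiring_1 set"
  assumes add: "\<And>x y. x \<in> Z \<Longrightarrow> y \<in> Z \<Longrightarrow> x + y \<in> Z" and "x \<in> Z" "u \<in> Z"
  shows "x + of_nat m * u \<in> Z"
proof (induction m)
  case (Suc m)
  then show ?case using add[OF Suc \<open>u \<in> Z\<close>] by (simp add: algebra_simps)
qed (simp add: \<open>x \<in> Z\<close>)

lemma add_closed_signed_multiple_mem:
  fixes Z :: "'a::comm_ring_1 set"
  assumes add: "\<And>x y. x \<in> Z \<Longrightarrow> y \<in> Z \<Longrightarrow> x + y \<in> Z" and "u \<in> Z" "v \<in> Z"
    and uv: "\<And>j k. k \<ge> 1 \<Longrightarrow> of_nat j * u + of_nat k * v + of_nat (j * k) * z \<in> Z"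
    and vu: "\<And>j k. k \<ge> 1 \<Longrightarrow> of_nat j * v + of_nat k * u - of_nat (j * k) * z \<in> Z"
    and "\<bar>s\<bar> \<le> int K" "K \<ge> 1"
  shows "of_nat K * (u + v) + of_int s * of_nat K * z \<in> Z"
proof (cases "s \<ge> 0")
  case True
  then have "of_nat (nat s) * u + of_nat K * v + of_nat (nat s * K) * z + of_nat (K - nat s) * u \<in> Z"
    by (intro add_closed_add_of_nat_mult[OF add uv \<open>u \<in> Z\<close>] \<open>K \<ge> 1\<close>)
  moreover have "of_nat (K - nat s) = (of_nat K - of_int s :: 'a)" "of_nat (nat s) = (of_int s :: 'a)"
    using True \<open>\<bar>s\<bar> \<le> int K\<close> by (simp_all add: of_nat_diff)
  ultimately show ?thesis by (simp add: algebra_simps)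
next
  case False
  then have "of_nat (nat (- s)) * v + of_nat K * u - of_nat (nat (- s) * K) * z + of_nat (K - nat (- s)) * v \<in> Z"
    by (intro add_closed_add_of_nat_mult[OF add vu \<open>v \<in> Z\<close>] \<open>K \<ge> 1\<close>)
  moreover have "of_nat (K - nat (- s)) = (of_nat K + of_int s :: 'a)" "of_nat (nat (- s)) = (- of_int s :: 'a)"
    using False \<open>\<bar>s\<bar> \<le> int K\<close> by (simp_all add: of_nat_diff)
  ultimately show ?thesis by (simp add: algebra_simps)
qed

lemma add_closed_zero_mem_of_int_relation:
  fixes Z :: "'a::comm_ring_1 set"
  assumes add: "\<And>x y. x \<in> Z \<Longrightarrow> y \<in> Z \<Longrightarrow> x + y \<in> Z"
    and fam1: "\<And>K s. K \<ge> 1 \<Longrightarrow> \<bar>s\<bar> \<le> int K \<Longrightarrow> of_nat K * w1 + of_int s * of_nat K * z1 \<in> Z"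
    and fam3: "\<And>K s. K \<ge> 1 \<Longrightarrow> \<bar>s\<bar> \<le> int K \<Longrightarrow> of_nat K * w3 + of_int s * of_nat K * z3 \<in> Z"
    and "Q > 0" and rel: "of_int Q * (w1 + w3) = of_int P1 * z1 + of_int P3 * z3"
  shows "0 \<in> Z"
proof -
  (* For K >= |P1|, |P3| the families contain K w1 - P1 K z1 and K w3 - P3 K z3, which by rel
     sum to (1 - Q) K (w1 + w3); adding (Q - 1) K further copies of w1 and w3 gives 0. *)
  define K where "K = nat (max \<bar>P1\<bar> \<bar>P3\<bar>) + 1"
  have "w1 \<in> Z" "w3 \<in> Z" using fam1[of 1 0] fam3[of 1 0] by simp_all
  have "\<bar>- P1\<bar> \<le> int K" "\<bar>- P3\<bar> \<le> int K" "K \<ge> 1" by (auto simp: K_def)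
  then have "of_nat K * w1 + of_int (- P1) * of_nat K * z1 \<in> Z"
    "of_nat K * w3 + of_int (- P3) * of_nat K * z3 \<in> Z"
    using fam1[of K "- P1"] fam3[of K "- P3"] by simp_all
  then have "(of_nat K * w1 - of_int P1 * of_nat K * z1) + (of_nat K * w3 - of_int P3 * of_nat K * z3)
      + of_nat (nat (Q - 1) * K) * w1 + of_nat (nat (Q - 1) * K) * w3 \<in> Z"
    by (intro add_closed_add_of_nat_mult[OF add] add \<open>w1 \<in> Z\<close> \<open>w3 \<in> Z\<close>) simp_all
  moreover have "of_nat (nat (Q - 1)) = (of_int Q - 1 :: 'a)"
    using \<open>Q > 0\<close> by (simp add: of_nat_nat)
  ultimately have "of_nat K * (of_int Q * (w1 + w3) - (of_int P1 * z1 + of_int P3 * z3)) \<in> Z"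
    by (simp add: algebra_simps)
  then show ?thesis unfolding rel by simp
qed

definition mid_dot :: "nat \<Rightarrow> (nat \<Rightarrow> 'a::comm_ring_1) \<Rightarrow> (nat \<Rightarrow> 'a) \<Rightarrow> 'a" where
  "mid_dot n f g = (\<Sum>k\<in>{1..n-2}. f k * g k)"

lemma mid_dot_add_left: "mid_dot n (\<lambda>k. f k + g k) h = mid_dot n f h + mid_dot n g h"
  by (simp add: mid_dot_def distrib_right sum.distrib)

lemma mid_dot_add_right: "mid_dot n h (\<lambda>k. f k + g k) = mid_dot n h f + mid_dot n h g"
  by (simp add: mid_dot_def distrib_left sum.distrib)

lemma mid_dot_scale_left: "mid_dot n (\<lambda>k. x * f k) h = x * mid_dot n f h"
  by (simp add: mid_dot_def sum_distrib_left mult.assoc)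

lemma mid_dot_scale_right: "mid_dot n h (\<lambda>k. x * f k) = x * mid_dot n h f"
  by (simp add: mid_dot_def sum_distrib_left mult.left_commute)

lemma mid_dot_neg_left:
  "\<forall>k\<in>{1..n-2}. f' k = - f k \<Longrightarrow> mid_dot n f' h = - mid_dot n f h"
  by (simp add: mid_dot_def sum_negf)

lemma mid_dot_neg_right:
  "\<forall>k\<in>{1..n-2}. g' k = - g k \<Longrightarrow> mid_dot n h g' = - mid_dot n h g"
  by (simp add: mid_dot_def sum_negf)

lemma heis_comm_eq_mid_dot:
  "heis_comm n M M' = mid_dot n (psi_a n M) (psi_b n M') - mid_dot n (psi_a n M') (psi_b n M)"
  by (simp add: heis_comm_def mid_dot_def)

lemma heis_comm_swap: "heis_comm n M' M = - heis_comm n M M'"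
  by (simp add: heis_comm_def)

definition heis_mat :: "nat \<Rightarrow> (nat \<Rightarrow> 'a::comm_ring_1) \<Rightarrow> (nat \<Rightarrow> 'a) \<Rightarrow> 'a \<Rightarrow> 'a mat" where
  "heis_mat n a b c = mat n n (\<lambda>(i, j). if i = j then 1 else if i = 0 \<and> j = n - 1 then c
     else if i = 0 then a j else if j = n - 1 then b i else 0)"

lemma heis_mat_dim [simp]: "dim_row (heis_mat n a b c) = n" "dim_col (heis_mat n a b c) = n"
  by (simp_all add: heis_mat_def)

lemma heis_mat_index:
  "i < n \<Longrightarrow> j < n \<Longrightarrow> heis_mat n a b c $$ (i, j) = (if i = j then 1
     else if i = 0 \<and> j = n - 1 then c else if i = 0 then a j else if j = n - 1 then b i else 0)"
  by (simp add: heis_mat_def)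

lemma sum_lessThan_split_ends:
  assumes "(n::nat) \<ge> 2"
  shows "(\<Sum>l<n. f l) = f 0 + f (n - 1) + (\<Sum>l\<in>{1..n-2}. f l)"
proof -
  have lt_n: "{..<n} = insert 0 (insert (n - 1) {1..n-2})"
    and ends: "0 \<notin> insert (n - 1) {1..n-2}" "n - 1 \<notin> {1..n-2}"
    using assms by auto
  show ?thesis
    unfolding lt_n sum.insert[OF finite_insert[THEN iffD2, OF finite_atLeastAtMost] ends(1)]
      sum.insert[OF finite_atLeastAtMost ends(2)] by (simp add: add.assoc)
qed

lemma heis_mat_mult:
  assumes n: "n \<ge> 2"
  shows "heis_mat n a b c * heis_mat n a' b' c' =
    heis_mat n (\<lambda>k. a k + a' k) (\<lambda>k. b k + b' k) (c + c' + mid_dot n a b')"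
proof (rule eq_matI)
  fix i j
  assume "i < dim_row (heis_mat n (\<lambda>k. a k + a' k) (\<lambda>k. b k + b' k) (c + c' + mid_dot n a b'))"
    and "j < dim_col (heis_mat n (\<lambda>k. a k + a' k) (\<lambda>k. b k + b' k) (c + c' + mid_dot n a b'))"
  then have ij: "i < n" "j < n" by simp_all
  let ?A = "heis_mat n a b c" and ?B = "heis_mat n a' b' c'"
  have "(?A * ?B) $$ (i, j) = (\<Sum>l<n. ?A $$ (i, l) * ?B $$ (l, j))"
    using ij by (simp add: scalar_prod_def atLeast0LessThan)
  also have "\<dots> = ?A $$ (i, 0) * ?B $$ (0, j) + ?A $$ (i, n - 1) * ?B $$ (n - 1, j)
      + (\<Sum>l\<in>{1..n-2}. ?A $$ (i, l) * ?B $$ (l, j))"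
    by (rule sum_lessThan_split_ends[OF n])
  finally have prod: "(?A * ?B) $$ (i, j) = ?A $$ (i, 0) * ?B $$ (0, j) + ?A $$ (i, n - 1) * ?B $$ (n - 1, j)
      + (\<Sum>l\<in>{1..n-2}. ?A $$ (i, l) * ?B $$ (l, j))" .
  consider "i = 0" | "i = n - 1" | "i \<in> {1..n-2}" using ij n by force
  then show "(?A * ?B) $$ (i, j) = heis_mat n (\<lambda>k. a k + a' k) (\<lambda>k. b k + b' k) (c + c' + mid_dot n a b') $$ (i, j)"
  proof cases
    case 1
    have "(\<Sum>l\<in>{1..n-2}. ?A $$ (i, l) * ?B $$ (l, j))
        = (\<Sum>l\<in>{1..n-2}. (if l = j then a l else 0) + (if j = n - 1 then a l * b' l else 0))"
      using 1 n ij by (intro sum.cong) (auto simp: heis_mat_index)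
    then show ?thesis using 1 n ij unfolding prod by (auto simp: sum.distrib mid_dot_def heis_mat_index)
  next
    case 2
    have "(\<Sum>l\<in>{1..n-2}. ?A $$ (i, l) * ?B $$ (l, j)) = 0"
      using 2 n ij by (intro sum.neutral) (auto simp: heis_mat_index)
    then show ?thesis using 2 n ij unfolding prod by (auto simp: heis_mat_index)
  next
    case 3
    have "(\<Sum>l\<in>{1..n-2}. ?A $$ (i, l) * ?B $$ (l, j)) = (\<Sum>l\<in>{1..n-2}. if l = i then ?B $$ (i, j) else 0)"
      using 3 n ij by (intro sum.cong) (auto simp: heis_mat_index)
    then show ?thesis using 3 n ij unfolding prod by (auto simp: heis_mat_index)
  qed
qed simp_all

lemma heis_mat_eq_one_mat:
  assumes "\<forall>k\<in>{1..n-2}. a k = 0 \<and> b k = 0"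
  shows "heis_mat n a b 0 = 1\<^sub>m n"
  by (rule eq_matI) (use assms in \<open>auto simp: heis_mat_index\<close>)

lemma heis_mat_psi:
  assumes "M \<in> heis n"
  shows "M = heis_mat n (psi_a n M) (psi_b n M) (psi_c n M)"
proof (rule eq_matI)
  fix i j assume "i < dim_row (heis_mat n (psi_a n M) (psi_b n M) (psi_c n M))"
    "j < dim_col (heis_mat n (psi_a n M) (psi_b n M) (psi_c n M))"
  then have ij: "i < n" "j < n" by simp_all
  then have "if i = j then M $$ (i, j) = 1 else if i = 0 \<or> j = n - 1 then gauss_rat (M $$ (i, j))
      else M $$ (i, j) = 0"
    using assms by (simp add: heis_def)
  then show "M $$ (i, j) = heis_mat n (psi_a n M) (psi_b n M) (psi_c n M) $$ (i, j)"
    using ij by (auto simp: heis_mat_index psi_a_def psi_b_def psi_c_def split: if_splits)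
qed (use assms in \<open>auto simp: heis_def\<close>)

lemma gauss_rat_psi:
  assumes "M \<in> heis n" and "n \<ge> 2"
  shows "k \<in> {1..n-2} \<Longrightarrow> gauss_rat (psi_a n M k)"
    and "k \<in> {1..n-2} \<Longrightarrow> gauss_rat (psi_b n M k)"
    and "gauss_rat (psi_c n M)"
  using assms by (auto simp: heis_def psi_a_def psi_b_def psi_c_def)

lemma gauss_rat_mid_dot:
  "(\<And>k. k \<in> {1..n-2} \<Longrightarrow> gauss_rat (f k) \<and> gauss_rat (g k)) \<Longrightarrow> gauss_rat (mid_dot n f g)"
  unfolding mid_dot_def by (rule gauss_rat_sum) (auto intro: gauss_rat_mult)

lemma gauss_rat_heis_comm:
  "M \<in> heis n \<Longrightarrow> M' \<in> heis n \<Longrightarrow> n \<ge> 2 \<Longrightarrow> gauss_rat (heis_comm n M M')"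
  unfolding heis_comm_eq_mid_dot by (intro gauss_rat_diff gauss_rat_mid_dot) (auto intro: gauss_rat_psi)

lemma gen_semigroup_carrier:
  assumes "S \<subseteq> carrier_mat n n" and "A \<in> gen_semigroup S"
  shows "A \<in> carrier_mat n n"
  using assms(2) by induction (use assms(1) in auto)

lemma gen_semigroup_mult_left:
  assumes S: "S \<subseteq> carrier_mat n n" and "A \<in> gen_semigroup S" and X: "X \<in> S"
  shows "X * A \<in> gen_semigroup S"
  using \<open>A \<in> gen_semigroup S\<close>
proof induction
  case (base M)
  then show ?case using X by (intro gen_semigroup.step gen_semigroup.base)
next
  case (step A M)
  have "X * (A * M) = X * A * M"
    using S X step gen_semigroup_carrier[OF S step(1)] by (intro assoc_mult_mat[symmetric]) auto
  then show ?case using step by (simp add: gen_semigroup.step)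
qed

context
  fixes n :: nat and G :: "nat \<Rightarrow> complex mat"
begin

(* Coordinates of the product of the generators along a word; the recursion for word_c is the
   product rule heis_mat_mult. *)
fun word_a :: "nat list \<Rightarrow> nat \<Rightarrow> complex" where
  "word_a [] k = 0"
| "word_a (j # w) k = psi_a n (G j) k + word_a w k"

fun word_b :: "nat list \<Rightarrow> nat \<Rightarrow> complex" where
  "word_b [] k = 0"
| "word_b (j # w) k = psi_b n (G j) k + word_b w k"

fun word_c :: "nat list \<Rightarrow> complex" where
  "word_c [] = 0"
| "word_c (j # w) = psi_c n (G j) + word_c w + mid_dot n (psi_a n (G j)) (word_b w)"

fun word_mat :: "nat list \<Rightarrow> complex mat" where
  "word_mat [] = 1\<^sub>m n"
| "word_mat (j # w) = G j * word_mat w"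

definition balanced :: "nat list \<Rightarrow> bool" where
  "balanced w \<longleftrightarrow> (\<forall>k\<in>{1..n-2}. word_a w k = 0 \<and> word_b w k = 0)"

definition word_pow :: "nat \<Rightarrow> nat list \<Rightarrow> nat list" where
  "word_pow m w = concat (replicate m w)"

lemma word_a_Cons_fun: "word_a (j # w) = (\<lambda>k. psi_a n (G j) k + word_a w k)"
  by (rule ext) simp

lemma word_b_Cons_fun: "word_b (j # w) = (\<lambda>k. psi_b n (G j) k + word_b w k)"
  by (rule ext) simp

lemma word_mat_eq_heis_mat:
  assumes "n \<ge> 2" and "\<forall>j\<in>set w. G j \<in> heis n"
  shows "word_mat w = heis_mat n (word_a w) (word_b w) (word_c w)"
  using assms(2)
proof (induction w)
  case Nil
  show ?case by (simp add: heis_mat_eq_one_mat[symmetric])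
next
  case (Cons j w)
  then have "word_mat (j # w) = heis_mat n (psi_a n (G j)) (psi_b n (G j)) (psi_c n (G j))
      * heis_mat n (word_a w) (word_b w) (word_c w)"
    using heis_mat_psi[of "G j" n] by simp
  also have "\<dots> = heis_mat n (word_a (j # w)) (word_b (j # w)) (word_c (j # w))"
    unfolding heis_mat_mult[OF \<open>n \<ge> 2\<close>] word_a_Cons_fun word_b_Cons_fun by simp
  finally show ?case .
qed

lemma word_mat_mem_gen_semigroup:
  assumes "\<forall>j<t. G j \<in> carrier_mat n n" and "w \<noteq> []" "set w \<subseteq> {..<t}"
  shows "word_mat w \<in> gen_semigroup (G ` {..<t})"
  using assms(2,3)
proof (induction w)
  case (Cons j w)
  then have "j < t" by simp
  show ?case
  proof (cases "w = []")
    case True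
    have "G j * 1\<^sub>m n = G j" using assms(1) \<open>j < t\<close> by (metis right_mult_one_mat)
    then show ?thesis using True \<open>j < t\<close> by (simp add: gen_semigroup.base)
  next
    case False
    have "G ` {..<t} \<subseteq> carrier_mat n n" using assms(1) by auto
    then show ?thesis using Cons False \<open>j < t\<close> by (simp add: gen_semigroup_mult_left)
  qed
qed simp

lemma word_a_append: "word_a (u @ v) = (\<lambda>k. word_a u k + word_a v k)"
  by (induction u) (auto simp: fun_eq_iff)

lemma word_b_append: "word_b (u @ v) = (\<lambda>k. word_b u k + word_b v k)"
  by (induction u) (auto simp: fun_eq_iff)

lemma word_c_append: "word_c (u @ v) = word_c u + word_c v + mid_dot n (word_a u) (word_b v)"
proof (induction u)
  case Nil
  show ?case by (simp add: mid_dot_def)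
next
  case (Cons j u)
  then show ?case
    by (simp add: word_b_append word_a_Cons_fun mid_dot_add_left mid_dot_add_right algebra_simps)
qed

lemma word_a_pow: "word_a (word_pow m w) = (\<lambda>k. of_nat m * word_a w k)"
  by (induction m) (auto simp: word_pow_def word_a_append fun_eq_iff algebra_simps)

lemma word_b_pow: "word_b (word_pow m w) = (\<lambda>k. of_nat m * word_b w k)"
  by (induction m) (auto simp: word_pow_def word_b_append fun_eq_iff algebra_simps)

lemma word_c_pow:
  "word_c (word_pow m w) = of_nat m * word_c w
     + of_nat m * (of_nat m - 1) / 2 * mid_dot n (word_a w) (word_b w)"
proof (induction m)
  case (Suc m)
  have pow: "word_pow (Suc m) w = w @ word_pow m w" by (simp add: word_pow_def)
  show ?case
    unfolding pow word_c_append Suc word_b_pow mid_dot_scale_right by (simp add: field_simps)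
qed (simp add: word_pow_def)

lemma set_word_pow: "set (word_pow m w) \<subseteq> set w"
  by (auto simp: word_pow_def)

lemma balanced_append: "balanced u \<Longrightarrow> balanced v \<Longrightarrow> balanced (u @ v)"
  by (simp add: balanced_def word_a_append word_b_append)

lemma balanced_pow_append_pow:
  "balanced (u @ v) \<Longrightarrow> balanced (word_pow m u @ word_pow m v)"
  by (simp add: balanced_def word_a_append word_b_append word_a_pow word_b_pow flip: distrib_left)

lemma word_c_append_balanced: "balanced u \<Longrightarrow> word_c (u @ v) = word_c u + word_c v"
  by (simp add: word_c_append balanced_def mid_dot_def)

lemma mid_dot_balanced:
  assumes "balanced (u @ v)"
  shows "mid_dot n (word_a v) f = - mid_dot n (word_a u) f"
    and "mid_dot n f (word_b v) = - mid_dot n f (word_b u)"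
  using assms
  by (auto simp: balanced_def word_a_append word_b_append add_eq_0_iff2
      intro!: mid_dot_neg_left mid_dot_neg_right)

lemma word_c_pow_append_pow:
  assumes "balanced (u @ v)"
  shows "word_c (word_pow m u @ word_pow m v) = of_nat m * word_c (u @ v)"
  unfolding word_c_append word_a_pow word_b_pow word_c_pow mid_dot_scale_left mid_dot_scale_right
    mid_dot_balanced[OF assms]
  by (simp add: field_simps)

lemma word_c_commutator:
  assumes "balanced (u @ u')" "balanced (v @ v')"
  shows "word_c (u @ v @ u' @ v') = word_c (u @ u') + word_c (v @ v')
    + mid_dot n (word_a u) (word_b v) - mid_dot n (word_a v) (word_b u)"
  unfolding word_c_append word_a_append word_b_append mid_dot_add_left mid_dot_add_right
    mid_dot_balanced[OF assms(1)] mid_dot_balanced[OF assms(2)]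
  by simp

(* Modulo the centre rp is an inverse of p, so this word is the group commutator of
   p^j and q^k times central factors. *)
lemma word_c_generator_commutator:
  assumes "balanced (p # rp)" "balanced (q # rq)"
  shows "word_c (word_pow j [p] @ word_pow k [q] @ word_pow j rp @ word_pow k rq)
    = of_nat j * word_c (p # rp) + of_nat k * word_c (q # rq)
      + of_nat (j * k) * heis_comm n (G p) (G q)"
proof -
  have p: "balanced ([p] @ rp)" and q: "balanced ([q] @ rq)" using assms by simp_all
  have single: "word_a [i] = psi_a n (G i)" "word_b [i] = psi_b n (G i)" for i
    by (simp_all add: fun_eq_iff)
  show ?thesis
    unfolding word_c_commutator[OF balanced_pow_append_pow[OF p] balanced_pow_append_pow[OF q]]
      word_c_pow_append_pow[OF p] word_c_pow_append_pow[OF q] word_a_pow word_b_pow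
      mid_dot_scale_left mid_dot_scale_right single heis_comm_eq_mid_dot
    by (simp add: algebra_simps)
qed

lemma balanced_commutator_word:
  "balanced (u @ u') \<Longrightarrow> balanced (v @ v') \<Longrightarrow> balanced (u @ v @ u' @ v')"
  by (auto simp: balanced_def word_a_append word_b_append add_eq_0_iff2)

definition central_values :: "nat \<Rightarrow> complex set" where
  "central_values t = {word_c w | w. w \<noteq> [] \<and> set w \<subseteq> {..<t} \<and> balanced w}"

lemma central_values_add:
  assumes "x \<in> central_values t" and "y \<in> central_values t"
  shows "x + y \<in> central_values t"
proof -
  obtain u v where u: "x = word_c u" "u \<noteq> []" "set u \<subseteq> {..<t}" "balanced u"
    and v: "y = word_c v" "set v \<subseteq> {..<t}" "balanced v"
    using assms unfolding central_values_def by blast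
  then have "x + y = word_c (u @ v)" by (simp add: word_c_append_balanced)
  moreover have "u @ v \<noteq> [] \<and> set (u @ v) \<subseteq> {..<t} \<and> balanced (u @ v)"
    using u v by (simp add: balanced_append)
  ultimately show ?thesis unfolding central_values_def by blast
qed

lemma generator_commutator_mem_central_values:
  assumes "balanced (p # rp)" "balanced (q # rq)"
    and "set (p # rp) \<subseteq> {..<t}" "set (q # rq) \<subseteq> {..<t}" and "k \<ge> 1"
  shows "of_nat j * word_c (p # rp) + of_nat k * word_c (q # rq)
      + of_nat (j * k) * heis_comm n (G p) (G q) \<in> central_values t"
proof -
  let ?w = "word_pow j [p] @ word_pow k [q] @ word_pow j rp @ word_pow k rq"
  have "balanced (word_pow j [p] @ word_pow j rp)" "balanced (word_pow k [q] @ word_pow k rq)"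
    using assms(1,2) by (simp_all add: balanced_pow_append_pow)
  then have "balanced ?w" by (rule balanced_commutator_word)
  moreover have "?w \<noteq> []" using \<open>k \<ge> 1\<close> by (cases k) (simp_all add: word_pow_def)
  moreover have "set ?w \<subseteq> {..<t}" using assms(3,4) set_word_pow by fastforce
  ultimately show ?thesis
    unfolding central_values_def word_c_generator_commutator[OF assms(1,2), symmetric] by blast
qed

lemma signed_commutator_mem_central_values:
  assumes "balanced (p # rp)" "balanced (q # rq)"
    and "set (p # rp) \<subseteq> {..<t}" "set (q # rq) \<subseteq> {..<t}"
    and "\<bar>s\<bar> \<le> int K" "K \<ge> 1"
  shows "of_nat K * (word_c (p # rp) + word_c (q # rq))
      + of_int s * of_nat K * heis_comm n (G p) (G q) \<in> central_values t"
proof (rule add_closed_signed_multiple_mem[OF central_values_add _ _ _ _ assms(5,6)])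
  show "word_c (p # rp) \<in> central_values t" "word_c (q # rq) \<in> central_values t"
    using assms(1-4) unfolding central_values_def by blast+
  show "of_nat j * word_c (p # rp) + of_nat k * word_c (q # rq)
      + of_nat (j * k) * heis_comm n (G p) (G q) \<in> central_values t" if "k \<ge> 1" for j k
    by (rule generator_commutator_mem_central_values[OF assms(1-4) that])
  show "of_nat j * word_c (q # rq) + of_nat k * word_c (p # rp)
      - of_nat (j * k) * heis_comm n (G p) (G q) \<in> central_values t" if "k \<ge> 1" for j k
    using generator_commutator_mem_central_values[OF assms(2,1,4,3) that, of j]
    by (simp add: heis_comm_swap[of n "G q" "G p"])
qed

lemma balanced_word_of_non_redundant:
  assumes "non_redundant n t G p" and "p < t"
  obtains r where "set (p # r) \<subseteq> {..<t}" "balanced (p # r)"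
proof -
  obtain x where x: "x p \<ge> 1"
    "\<forall>k\<in>{1..n-2}. (\<Sum>j<t. of_nat (x j) * psi_a n (G j) k) = 0"
    "\<forall>k\<in>{1..n-2}. (\<Sum>j<t. of_nat (x j) * psi_b n (G j) k) = 0"
    using assms(1) unfolding non_redundant_def by blast
  define w where "w = concat (map (\<lambda>j. replicate (x j) j) [0..<t])"
  have "word_a (replicate m i) k = of_nat m * psi_a n (G i) k"
    "word_b (replicate m i) k = of_nat m * psi_b n (G i) k" for m i k
    by (induction m) (simp_all add: algebra_simps)
  then have "word_a w k = (\<Sum>j<t. of_nat (x j) * psi_a n (G j) k)"
    "word_b w k = (\<Sum>j<t. of_nat (x j) * psi_b n (G j) k)" for k
    unfolding w_def by (induction t) (simp_all add: word_a_append word_b_append)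
  then have "balanced w" using x(2,3) by (simp add: balanced_def)
  have "p \<in> set w" using x(1) assms(2) by (auto simp: w_def)
  then obtain u v where uv: "w = u @ p # v" by (metis split_list)
  \<comment> \<open>rotating a balanced word keeps it balanced\<close>
  have "balanced (p # v @ u)"
    using \<open>balanced w\<close> unfolding uv balanced_def by (simp add: word_a_append word_b_append algebra_simps)
  moreover have "set w \<subseteq> {..<t}" by (auto simp: w_def)
  then have "set (p # v @ u) \<subseteq> {..<t}" using uv by auto
  ultimately show ?thesis using that by blast
qed

lemma gauss_rat_word_c:
  assumes "n \<ge> 2" and "\<forall>j\<in>set w. G j \<in> heis n"
  shows "gauss_rat (word_c w)"
proof -
  have word_b: "gauss_rat (word_b v k)" if "\<forall>j\<in>set v. G j \<in> heis n" "k \<in> {1..n-2}" for v k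
    using that by (induction v) (auto intro!: gauss_rat_add gauss_rat_psi assms(1))
  show ?thesis using assms(2)
    by (induction w) (auto intro!: gauss_rat_add gauss_rat_mid_dot gauss_rat_psi word_b assms(1))
qed

lemma non_redundant_commutator_family:
  assumes "n \<ge> 2" and "\<forall>i<t. G i \<in> heis n" and "\<forall>i<t. non_redundant n t G i"
  obtains w where "\<And>i. i < t \<Longrightarrow> gauss_rat (w i)"
    and "\<And>p q K s. p < t \<Longrightarrow> q < t \<Longrightarrow> K \<ge> 1 \<Longrightarrow> \<bar>s\<bar> \<le> int K \<Longrightarrow>
      of_nat K * (w p + w q) + of_int s * of_nat K * heis_comm n (G p) (G q) \<in> central_values t"
proof -
  have "\<forall>i<t. \<exists>r. set (i # r) \<subseteq> {..<t} \<and> balanced (i # r)"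
    using balanced_word_of_non_redundant assms(3) by metis
  then obtain r where r: "\<And>i. i < t \<Longrightarrow> set (i # r i) \<subseteq> {..<t} \<and> balanced (i # r i)"
    by metis
  show ?thesis
  proof (rule that[of "\<lambda>i. word_c (i # r i)"])
    show "gauss_rat (word_c (i # r i))" if "i < t" for i
      using r[OF that] assms(2) by (intro gauss_rat_word_c assms(1)) blast
    show "of_nat K * (word_c (p # r p) + word_c (q # r q))
        + of_int s * of_nat K * heis_comm n (G p) (G q) \<in> central_values t"
      if "p < t" "q < t" "K \<ge> 1" "\<bar>s\<bar> \<le> int K" for p q K s
      using r[OF \<open>p < t\<close>] r[OF \<open>q < t\<close>] by (intro signed_commutator_mem_central_values that) blast+
  qed
qed

lemma one_mat_mem_gen_semigroup_if_zero_central: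
  assumes "n \<ge> 2" and "\<forall>j<t. G j \<in> heis n" and "0 \<in> central_values t"
  shows "1\<^sub>m n \<in> gen_semigroup (G ` {..<t})"
proof -
  obtain w where w: "w \<noteq> []" "set w \<subseteq> {..<t}" "balanced w" "word_c w = 0"
    using assms(3) unfolding central_values_def by auto
  have "\<forall>j\<in>set w. G j \<in> heis n" using assms(2) w(2) by auto
  then have "word_mat w = heis_mat n (word_a w) (word_b w) 0"
    unfolding w(4)[symmetric] by (rule word_mat_eq_heis_mat[OF assms(1)])
  also have "\<dots> = 1\<^sub>m n"
    using w(3) by (intro heis_mat_eq_one_mat) (simp add: balanced_def)
  finally have "word_mat w = 1\<^sub>m n" .
  moreover have "word_mat w \<in> gen_semigroup (G ` {..<t})"
    by (rule word_mat_mem_gen_semigroup) (use assms(2) w in \<open>auto simp: heis_def\<close>)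
  ultimately show ?thesis by simp
qed

end

theorem lemma5:
  fixes n t :: nat and G :: "nat \<Rightarrow> complex mat"
    and M1 M2 M3 M4 :: "complex mat"
  assumes "n \<ge> 2"
    and "\<forall>i<t. G i \<in> heis n"
    and "\<forall>i<t. non_redundant n t G i"
    and "M1 \<in> G ` {..<t}" "M2 \<in> G ` {..<t}" "M3 \<in> G ` {..<t}" "M4 \<in> G ` {..<t}"
    and "\<not> same_angle (heis_comm n M1 M2) (heis_comm n M3 M4)"
  shows "1\<^sub>m n \<in> gen_semigroup (G ` {..<t})"
proof -
  obtain w where gauss: "\<And>i. i < t \<Longrightarrow> gauss_rat (w i)"
    and family: "\<And>p q K s. p < t \<Longrightarrow> q < t \<Longrightarrow> K \<ge> 1 \<Longrightarrow> \<bar>s\<bar> \<le> int K \<Longrightarrow>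
      of_nat K * (w p + w q) + of_int s * of_nat K * heis_comm n (G p) (G q) \<in> central_values n G t"
    using non_redundant_commutator_family[OF assms(1-3)] by blast
  obtain i1 i2 i3 i4 where i: "i1 < t" "i2 < t" "i3 < t" "i4 < t"
    and M: "M1 = G i1" "M2 = G i2" "M3 = G i3" "M4 = G i4"
    using assms(4-7) by blast
  have "gauss_rat (w i1 + w i2 + (w i3 + w i4))"
    using i by (simp add: gauss gauss_rat_add)
  moreover have "gauss_rat (heis_comm n M1 M2)" "gauss_rat (heis_comm n M3 M4)"
    unfolding M using i assms(1,2) by (simp_all add: gauss_rat_heis_comm)
  moreover have "Im (heis_comm n M1 M2 * cnj (heis_comm n M3 M4)) \<noteq> 0"
    using assms(8) by (rule Im_mult_cnj_neq_0_if_not_same_angle)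
  ultimately obtain Q P1 P3 where "Q > 0" and rel: "of_int Q * (w i1 + w i2 + (w i3 + w i4))
      = of_int P1 * heis_comm n M1 M2 + of_int P3 * heis_comm n M3 M4"
    using gauss_rat_int_combination by blast
  have "0 \<in> central_values n G t"
    by (rule add_closed_zero_mem_of_int_relation[OF central_values_add
          family[OF i(1,2), folded M] family[OF i(3,4), folded M] \<open>Q > 0\<close> rel])
  then show ?thesis by (rule one_mat_mem_gen_semigroup_if_zero_central[OF assms(1,2)])
qed

end
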